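(* Let $k,m\in\mathbb{N}$ with $m<k\le 2m$, $k$ even, and $\gcd(2k+1,2(2m+1))=1$; let $a>0$ satisfy $\frac{1}{4km+3k+m+1}\le\frac{a}{2k+1}\le\frac{1}{4km+k+3m+1}$ and put $b=\frac{2k+1}{2a(2m+1)}$ and $Y=\frac{1}{2a(2m+1)}$. For $s=0,\dots,4m+1$, $n=0,\dots,2k$ define $X_{sn}=\frac{s}{2(2m+1)}-\frac{n}{2k+1}$, $\Phi_{sn}=\sum_{l\in\mathbb{Z}}Q_2\big(2a(2m+1)(l+X_{sn})\big)$ with $Q_2(x)=(1-|x|)\chi_{[-1,1]}(x)$, and $A_{sn}=\Phi_{sn}-\Phi_{s,2k+1-n}$ for $n=1,\dots,k$. Then for $s=1,\dots,m$ and $n=1,\dots,k/2$, $$A_{sn}=\begin{cases}2n/b,& 0<X_{sn}<Y,\\ 2as,& -Y<X_{sn}<0.\end{cases}$$ *)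

theory Defs
  imports "HOL-Analysis.Analysis"
begin

definition Q2 :: "real \<Rightarrow> real" where
  "Q2 x = (if \<bar>x\<bar> \<le> 1 then 1 - \<bar>x\<bar> else 0)"

definition Xsn :: "nat \<Rightarrow> nat \<Rightarrow> nat \<Rightarrow> nat \<Rightarrow> real" where
  "Xsn k m s n = real s / (2 * (2 * real m + 1)) - real n / (2 * real k + 1)"

definition Phi :: "real \<Rightarrow> nat \<Rightarrow> nat \<Rightarrow> nat \<Rightarrow> nat \<Rightarrow> real" where
  "Phi a k m s n = (\<Sum>\<^sub>\<infinity> l::int. Q2 (2 * a * (2 * real m + 1) * (real_of_int l + Xsn k m s n)))"

definition Asn :: "real \<Rightarrow> nat \<Rightarrow> nat \<Rightarrow> nat \<Rightarrow> nat \<Rightarrow> real" where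
  "Asn a k m s n = Phi a k m s n - Phi a k m s (2 * k + 1 - n)"

end

theory Submission
  imports Defs
begin

text \<open>With c = 2a(2m+1), p = s/(2(2m+1)) and q = n/(2k+1) we have X(s, n) = p - q and
  X(s, 2k+1-n) = (p + q) - 1. The bounds on a give c(p + q) < 1 \<le> c(1 - (p + q)), so the
  support [-1/c, 1/c] of Q2(c x) meets exactly one of the shifts l + X: the term l = 0 of
  Phi(s, n) and the term l = 1 of Phi(s, 2k+1-n). Hence
  A(s, n) = (1 - c|p - q|) - (1 - c(p + q)) = 2c min p q,
  which is 2cq = 2n/b for X(s, n) > 0 and 2cp = 2as for X(s, n) < 0.\<close>

lemma infsum_Q2_single_term:
  fixes c t :: real and l0 :: int
  assumes "c > 0" and far: "\<And>l::int. l \<noteq> l0 \<Longrightarrow> 1 \<le> c * \<bar>real_of_int l + t\<bar>"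
  shows "(\<Sum>\<^sub>\<infinity> l::int. Q2 (c * (real_of_int l + t))) = Q2 (c * (real_of_int l0 + t))"
proof -
  have "(\<Sum>\<^sub>\<infinity> l::int. Q2 (c * (real_of_int l + t))) = (\<Sum>\<^sub>\<infinity> l\<in>{l0}. Q2 (c * (real_of_int l + t)))"
  proof (rule infsum_cong_neutral)
    fix l assume "l \<in> UNIV - {l0}"
    then have "1 \<le> \<bar>c * (real_of_int l + t)\<bar>"
      using far \<open>c > 0\<close> by (auto simp: abs_mult)
    then show "Q2 (c * (real_of_int l + t)) = 0"
      unfolding Q2_def by auto
  qed auto
  then show ?thesis by simp
qed

lemma periodized_Q2_reflection_difference:
  fixes c p q :: real
  assumes "c > 0" "p \<ge> 0" "q \<ge> 0" "c * (p + q) \<le> 1" "1 \<le> c * (1 - (p + q))"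
  shows "(\<Sum>\<^sub>\<infinity> l::int. Q2 (c * (real_of_int l + (p - q))))
       - (\<Sum>\<^sub>\<infinity> l::int. Q2 (c * (real_of_int l + (p + q - 1)))) = 2 * c * min p q"
proof -
  have far: "1 \<le> c * \<bar>real_of_int j + t\<bar>" if "j \<noteq> 0" "\<bar>t\<bar> \<le> p + q" for j :: int and t
  proof -
    have "1 \<le> \<bar>real_of_int j\<bar>" using \<open>j \<noteq> 0\<close> by linarith
    then have "1 - (p + q) \<le> \<bar>real_of_int j + t\<bar>" using that(2) by linarith
    then have "c * (1 - (p + q)) \<le> c * \<bar>real_of_int j + t\<bar>"
      using \<open>c > 0\<close> by (intro mult_left_mono) auto
    then show ?thesis using assms(5) by linarith
  qed
  have "(\<Sum>\<^sub>\<infinity> l::int. Q2 (c * (real_of_int l + (p - q)))) = Q2 (c * (p - q))"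
    using infsum_Q2_single_term[of c 0 "p - q"] far assms(1-3) by simp
  moreover have "(\<Sum>\<^sub>\<infinity> l::int. Q2 (c * (real_of_int l + (p + q - 1)))) = Q2 (c * (p + q))"
  proof -
    have "1 \<le> c * \<bar>real_of_int l + (p + q - 1)\<bar>" if "l \<noteq> 1" for l :: int
      using far[of "l - 1" "p + q"] that assms(2,3) by (simp add: algebra_simps)
    then show ?thesis
      using infsum_Q2_single_term[of c 1 "p + q - 1"] \<open>c > 0\<close> by simp
  qed
  moreover have "Q2 (c * (p - q)) = 1 - c * \<bar>p - q\<bar>" "Q2 (c * (p + q)) = 1 - c * (p + q)"
  proof -
    have "c * \<bar>p - q\<bar> \<le> c * (p + q)"
      using assms(1-3) by (intro mult_left_mono) auto
    then have "c * \<bar>p - q\<bar> \<le> 1"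
      using assms(4) by linarith
    then show "Q2 (c * (p - q)) = 1 - c * \<bar>p - q\<bar>" "Q2 (c * (p + q)) = 1 - c * (p + q)"
      using assms(1-4) unfolding Q2_def by (simp_all add: abs_mult)
  qed
  moreover have "c * (p + q) - c * \<bar>p - q\<bar> = 2 * c * min p q"
    by (simp add: min_def abs_if algebra_simps)
  ultimately show ?thesis by simp
qed

lemma scaled_window_bounds:
  fixes k m s n :: nat and a :: real
  assumes "s \<le> m" "2 * n \<le> k" "a > 0"
    and lower: "1 / (4 * real k * real m + 3 * real k + real m + 1) \<le> a / (2 * real k + 1)"
    and upper: "a / (2 * real k + 1) \<le> 1 / (4 * real k * real m + real k + 3 * real m + 1)"
  defines "c \<equiv> 2 * a * (2 * real m + 1)"
    and "w \<equiv> real s / (2 * (2 * real m + 1)) + real n / (2 * real k + 1)"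
  shows "c * w < 1" and "1 \<le> c * (1 - w)"
proof -
  define N where "N = s * (2 * k + 1) + 2 * n * (2 * m + 1)"
  have "N \<le> m * (2 * k + 1) + k * (2 * m + 1)"
    unfolding N_def using assms(1,2) by (intro add_mono mult_right_mono) auto
  then have "real N \<le> real (m * (2 * k + 1) + k * (2 * m + 1))"
    by (rule of_nat_mono)
  then have N_le: "real N \<le> 4 * real k * real m + real k + real m"
    by (simp add: algebra_simps)
  \<comment> \<open>abstracting 2m+1 and 2k+1 keeps field_simps from expanding them\<close>
  have "2 * a * M * (real s / (2 * M) + real n / K) * K = a * (real s * K + 2 * real n * M)"
    if "M > 0" "K > 0" for M K :: real
    using that by (simp add: field_simps)
  from this[of "2 * real m + 1" "2 * real k + 1"]
  have cw: "c * w * (2 * real k + 1) = a * real N"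
    unfolding c_def w_def N_def of_nat_add of_nat_mult of_nat_numeral of_nat_1 by simp
  have c_scaled: "c * (2 * real k + 1) = a * (2 * (2 * real m + 1) * (2 * real k + 1))"
    unfolding c_def by simp
  have "a * (4 * real k * real m + real k + 3 * real m + 1) \<le> 2 * real k + 1"
    using upper by (simp add: field_simps add_pos_nonneg)
  moreover have "a * real N < a * (4 * real k * real m + real k + 3 * real m + 1)"
    using N_le \<open>a > 0\<close> by (intro mult_strict_left_mono) auto
  ultimately have "c * w * (2 * real k + 1) < 2 * real k + 1"
    unfolding cw by linarith
  then show "c * w < 1" by simp
  have "2 * real k + 1 \<le> a * (4 * real k * real m + 3 * real k + real m + 1)"
    using lower by (simp add: field_simps add_pos_nonneg)
  also have "\<dots> \<le> a * (2 * (2 * real m + 1) * (2 * real k + 1) - real N)"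
    using N_le \<open>a > 0\<close> by (intro mult_left_mono) (auto simp: algebra_simps)
  also have "\<dots> = c * (1 - w) * (2 * real k + 1)"
    using cw c_scaled by (simp add: algebra_simps)
  finally show "1 \<le> c * (1 - w)" by simp
qed

theorem lemma3p4:
  fixes k m :: nat and a b Y :: real
  assumes "m < k" and "k \<le> 2 * m" and "even k"
    and "gcd (2 * k + 1) (2 * (2 * m + 1)) = 1"
    and "a > 0"
    and "1 / (4 * real k * real m + 3 * real k + real m + 1) \<le> a / (2 * real k + 1)"
    and "a / (2 * real k + 1) \<le> 1 / (4 * real k * real m + real k + 3 * real m + 1)"
    and "b = (2 * real k + 1) / (2 * a * (2 * real m + 1))"
    and "Y = 1 / (2 * a * (2 * real m + 1))"
  shows "\<forall>s \<in> {1..m}. \<forall>n \<in> {1..k div 2}.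
           (0 < Xsn k m s n \<and> Xsn k m s n < Y \<longrightarrow> Asn a k m s n = 2 * real n / b) \<and>
           (- Y < Xsn k m s n \<and> Xsn k m s n < 0 \<longrightarrow> Asn a k m s n = 2 * a * real s)"
proof (intro ballI)
  fix s n assume "s \<in> {1..m}" "n \<in> {1..k div 2}"
  then have "s \<le> m" "2 * n \<le> k" by auto
  define c where "c = 2 * a * (2 * real m + 1)"
  define p where "p = real s / (2 * (2 * real m + 1))"
  define q where "q = real n / (2 * real k + 1)"
  have X: "Xsn k m s n = p - q"
    unfolding Xsn_def p_def q_def ..
  have X_reflected: "Xsn k m s (2 * k + 1 - n) = p + q - 1"
    unfolding Xsn_def p_def q_def using \<open>2 * n \<le> k\<close> by (simp add: of_nat_diff diff_divide_distrib)
  have "c * (p + q) < 1" "1 \<le> c * (1 - (p + q))"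
    using scaled_window_bounds[OF \<open>s \<le> m\<close> \<open>2 * n \<le> k\<close> assms(5-7)] unfolding c_def p_def q_def by auto
  then have A: "Asn a k m s n = 2 * c * min p q"
    unfolding Asn_def Phi_def X X_reflected c_def[symmetric]
    using assms(5) by (intro periodized_Q2_reflection_difference) (auto simp: c_def p_def q_def)
  have "c * q = real n / b" "c * p = a * real s"
    unfolding assms(8) c_def p_def q_def by (simp_all add: field_simps)
  then show "(0 < Xsn k m s n \<and> Xsn k m s n < Y \<longrightarrow> Asn a k m s n = 2 * real n / b) \<and>
           (- Y < Xsn k m s n \<and> Xsn k m s n < 0 \<longrightarrow> Asn a k m s n = 2 * a * real s)"
    unfolding A X by (auto simp: min_def)
qed

end
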